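(* Let $G$ be a connected threshold graph that is not complete. Then $\chi(\mathcal{R}(G))=3$.
   Context: A threshold graph is a graph that can be constructed from a single vertex by repeatedly adding either an isolated vertex or a universal vertex (a vertex adjacent to all existing vertices). For a connected graph $G$, a search tree on $G$ is a rooted tree with vertex set $V(G)$ defined recursively: its root is some vertex $r\in V(G)$, and the children of $r$ are the roots of search trees on the connected components of $G-r$. For a rooted tree $T$ and $w\in V(T)$, $T|w$ denotes the subtree rooted at $w$. Let $T$ be a search tree on $G$, let $v$ be a child of $u$ in $T$, and let $p$ be the parent of $u$ (if it exists). The $uv$-rotation transforms $T$ into the search tree $T'$ in which: $u$ is a child of $v$ and $v$ is a child of $p$ (or $v$ is the root if $u$ was the root); every subtree of $u$ in $T$ other than $T|v$ is a subtree of $u$ in $T'$; and every subtree $S$ of $v$ in $T$ is a subtree of $u$ in $T'$ if $u$ is adjacent in $G$ to some vertex of $S$, and a subtree of $v$ in $T'$ otherwise. The rotation graph $\mathcal{R}(G)$ is the graph whose vertices are the search trees on $G$, two being adjacent iff they differ by one rotation. $\chi$ denotes chromatic number. *)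

theory Defs
  imports Main
begin

text \<open>Graphs: a vertex set V and an edge set E of two-element subsets.
  Adjacency of u and v is {u,v} \<in> E.\<close>

inductive threshold :: "'a set \<Rightarrow> 'a set set \<Rightarrow> bool" where
  single: "threshold {v} {}"
| add_isolated: "threshold V E \<Longrightarrow> v \<notin> V \<Longrightarrow> threshold (insert v V) E"
| add_universal: "threshold V E \<Longrightarrow> v \<notin> V \<Longrightarrow>
     threshold (insert v V) (E \<union> {{v, u} | u. u \<in> V})"

definition complete_graph :: "'a set \<Rightarrow> 'a set set \<Rightarrow> bool" where
  "complete_graph V E \<longleftrightarrow> (\<forall>u\<in>V. \<forall>v\<in>V. u \<noteq> v \<longrightarrow> {u, v} \<in> E)"

definition ind_rel :: "'a set set \<Rightarrow> 'a set \<Rightarrow> ('a \<times> 'a) set" where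
  "ind_rel E S = {(u, v). u \<in> S \<and> v \<in> S \<and> {u, v} \<in> E}"

definition connected_in :: "'a set set \<Rightarrow> 'a set \<Rightarrow> bool" where
  "connected_in E S \<longleftrightarrow> S \<noteq> {} \<and> (\<forall>u\<in>S. \<forall>v\<in>S. (u, v) \<in> (ind_rel E S)\<^sup>*)"

definition components :: "'a set set \<Rightarrow> 'a set \<Rightarrow> 'a set set" where
  "components E S = {{v \<in> S. (u, v) \<in> (ind_rel E S)\<^sup>*} | u. u \<in> S}"

text \<open>A rooted tree on a vertex set is represented by its root r and the set P
  of (child, parent) pairs.\<close>
inductive search_tree :: "'a set set \<Rightarrow> 'a set \<Rightarrow> 'a \<Rightarrow> ('a \<times> 'a) set \<Rightarrow> bool"
  for E :: "'a set set" where
  "r \<in> V \<Longrightarrow> connected_in E V \<Longrightarrow>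
   (\<forall>C \<in> components E (V - {r}). rt C \<in> C \<and> search_tree E C (rt C) (Pf C)) \<Longrightarrow>
   P = (\<Union>C \<in> components E (V - {r}). insert (rt C, r) (Pf C)) \<Longrightarrow>
   search_tree E V r P"

type_synonym 'a rtree = "'a \<times> ('a \<times> 'a) set"

definition search_trees :: "'a set set \<Rightarrow> 'a set \<Rightarrow> 'a rtree set" where
  "search_trees E V = {(r, P). search_tree E V r P}"

definition desc :: "('a \<times> 'a) set \<Rightarrow> 'a \<Rightarrow> 'a set" where
  "desc P w = {x. (x, w) \<in> P\<^sup>*}"

text \<open>The uv-rotation, where v is a child of u: u becomes a child of v, v takes u's place;
  each subtree T|c of v is moved to u iff u is adjacent to some vertex of T|c.\<close>
definition rotate :: "'a set set \<Rightarrow> 'a rtree \<Rightarrow> 'a \<Rightarrow> 'a \<Rightarrow> 'a rtree" where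
  "rotate E T u v = (let r = fst T; P = snd T in
     (if u = r then v else r,
      {(x, y) \<in> P. x \<noteq> u \<and> x \<noteq> v \<and> \<not> (y = v \<and> (\<exists>s\<in>desc P x. {u, s} \<in> E))}
      \<union> {(c, u) | c. (c, v) \<in> P \<and> (\<exists>s\<in>desc P c. {u, s} \<in> E)}
      \<union> {(u, v)}
      \<union> {(v, p) | p. (u, p) \<in> P}))"

definition rot_step :: "'a set set \<Rightarrow> 'a rtree \<Rightarrow> 'a rtree \<Rightarrow> bool" where
  "rot_step E T T' \<longleftrightarrow> (\<exists>u v. (v, u) \<in> snd T \<and> T' = rotate E T u v)"

definition rot_adj :: "'a set set \<Rightarrow> 'a rtree \<Rightarrow> 'a rtree \<Rightarrow> bool" where
  "rot_adj E T T' \<longleftrightarrow> rot_step E T T' \<or> rot_step E T' T"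

definition colorable :: "'b set \<Rightarrow> ('b \<Rightarrow> 'b \<Rightarrow> bool) \<Rightarrow> nat \<Rightarrow> bool" where
  "colorable W A k \<longleftrightarrow> (\<exists>f. f ` W \<subseteq> {..<k} \<and>
     (\<forall>x\<in>W. \<forall>y\<in>W. A x y \<longrightarrow> f x \<noteq> f y))"

definition chromatic_number :: "'b set \<Rightarrow> ('b \<Rightarrow> 'b \<Rightarrow> bool) \<Rightarrow> nat" where
  "chromatic_number W A = (LEAST k. colorable W A k)"

end

theory Submission
  imports Defs
begin

text \<open>
  A threshold graph has a creation sequence: an injective order pos on the vertices and a set
  of dominating vertices such that two vertices are adjacent iff the later one is dominating.
  In particular the latest vertex of a connected set with at least two vertices is dominating.

  Give a vertex z of a search tree weight 0 if it is the latest vertex of its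
  subtree, and otherwise 1 plus the parity of the number of ancestors a of z such that a is
  later than z iff a is adjacent to z; colour the tree by the sum of the weights modulo 3.
  A uv-rotation only adds v to, or removes u from, the ancestor sets of vertices below u,
  and by the dominance property it does so only for vertices whose weight is 0 or for
  ancestors that are not counted. So only the weights of u and v can change, and exactly one
  of them does, which changes the colour.

  A connected threshold graph that is not complete has a universal vertex w and
  two non-adjacent vertices a, c. The five search trees on the path a - w - c form a 5-cycle
  of rotations, and stacking the remaining vertices above them as a path keeps this an odd
  cycle in the rotation graph.
\<close>

section \<open>Creation sequences of threshold graphs\<close>

locale creation_sequence =
  fixes V :: "'a set" and E :: "'a set set"
    and pos :: "'a \<Rightarrow> nat" and dominating :: "'a \<Rightarrow> bool"
  assumes finite_vertices: "finite V"
    and inj_pos: "inj_on pos V"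
    and edge_pair: "e \<in> E \<Longrightarrow> \<exists>x\<in>V. \<exists>y\<in>V. x \<noteq> y \<and> e = {x, y}"
    and adjacent_iff: "x \<in> V \<Longrightarrow> y \<in> V \<Longrightarrow>
      {x, y} \<in> E \<longleftrightarrow> x \<noteq> y \<and> (pos x < pos y \<and> dominating y \<or> pos y < pos x \<and> dominating x)"
begin

lemma edge_in_V: "{x, y} \<in> E \<Longrightarrow> x \<in> V"
  using edge_pair by (fastforce simp: doubleton_eq_iff)

lemma no_loop: "{x, x} \<notin> E"
  using edge_pair by (fastforce simp: doubleton_eq_iff)

lemma pos_eq_iff: "x \<in> V \<Longrightarrow> y \<in> V \<Longrightarrow> pos x = pos y \<longleftrightarrow> x = y"
  using inj_pos by (auto dest: inj_onD)

lemma adjacent_later_dominating: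
  "x \<in> V \<Longrightarrow> y \<in> V \<Longrightarrow> pos x < pos y \<Longrightarrow> dominating y \<Longrightarrow> {x, y} \<in> E"
  using adjacent_iff by auto

lemma extend_by_vertex:
  assumes "v \<notin> V"
  shows "creation_sequence (insert v V) (if b then E \<union> {{v, x} | x. x \<in> V} else E)
    (pos(v := Suc (Max (pos ` V)))) (dominating(v := b))"
    (is "creation_sequence _ ?E ?pos ?dominating")
proof
  have before_v: "?pos x < ?pos v" if "x \<in> V" for x
    using that assms finite_vertices by (auto simp: le_imp_less_Suc)
  have adjacent_v: "{v, x} \<in> ?E \<longleftrightarrow> b \<and> x \<in> V" for x
    using edge_in_V[of v x] assms by (auto simp: doubleton_eq_iff)
  have adjacent_old: "{x, y} \<in> ?E \<longleftrightarrow> {x, y} \<in> E" if "x \<noteq> v" "y \<noteq> v" for x y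
    using that by (auto simp: doubleton_eq_iff)
  show "finite (insert v V)" using finite_vertices by simp
  show "inj_on ?pos (insert v V)"
    using inj_pos before_v assms unfolding inj_on_def by (metis fun_upd_apply insert_iff less_irrefl)
  fix x y assume x: "x \<in> insert v V" and y: "y \<in> insert v V"
  consider "x = v" "y = v" | "x = v" "y \<in> V" "y \<noteq> v" | "y = v" "x \<in> V" "x \<noteq> v"
    | "x \<in> V" "y \<in> V" "x \<noteq> v" "y \<noteq> v"
    using x y by blast
  then show "{x, y} \<in> ?E \<longleftrightarrow>
      x \<noteq> y \<and> (?pos x < ?pos y \<and> ?dominating y \<or> ?pos y < ?pos x \<and> ?dominating x)"
  proof cases
    case 1
    then show ?thesis using adjacent_v[of v] assms by simp
  next
    case 2
    then show ?thesis using adjacent_v[of y] before_v[of y] by auto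
  next
    case 3
    then show ?thesis using adjacent_v[of x] before_v[of x] by (auto simp: insert_commute)
  next
    case 4
    then show ?thesis using adjacent_old adjacent_iff by simp
  qed
next
  fix e assume "e \<in> (if b then E \<union> {{v, x} | x. x \<in> V} else E)"
  then show "\<exists>x\<in>insert v V. \<exists>y\<in>insert v V. x \<noteq> y \<and> e = {x, y}"
    using edge_pair assms by (auto split: if_splits)
qed

end

lemma threshold_creation_sequence:
  assumes "threshold V E"
  shows "\<exists>pos dominating. creation_sequence V E pos dominating"
  using assms
proof (induction rule: threshold.induct)
  case (single v)
  have "creation_sequence {v} {} (\<lambda>_. 0) (\<lambda>_. False)"
    by unfold_locales auto
  then show ?case by blast
next
  case (add_isolated V E v)
  then obtain pos dominating where "creation_sequence V E pos dominating" by blast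
  from creation_sequence.extend_by_vertex[OF this \<open>v \<notin> V\<close>, where b = False] show ?case by auto
next
  case (add_universal V E v)
  then obtain pos dominating where "creation_sequence V E pos dominating" by blast
  from creation_sequence.extend_by_vertex[OF this \<open>v \<notin> V\<close>, where b = True] show ?case by auto
qed

lemma (in creation_sequence) latest_vertex_dominating:
  assumes "connected_in E D" "D \<subseteq> V" "x \<in> D" "y \<in> D" "pos x < pos y"
  obtains d where "d \<in> D" "dominating d" "\<And>z. z \<in> D \<Longrightarrow> pos z \<le> pos d"
proof -
  have fin: "finite D" using assms(2) finite_vertices finite_subset by blast
  obtain d where d: "d \<in> D" "\<And>z. z \<in> D \<Longrightarrow> pos z \<le> pos d"
    using Max_in[of "pos ` D"] fin assms(3) by (metis Max_ge empty_iff finite_imageI image_iff)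
  have "x \<noteq> d" using assms(4,5) d(2) by (metis not_le)
  moreover have "(x, d) \<in> (ind_rel E D)\<^sup>*"
    using assms(1,3) d(1) unfolding connected_in_def by blast
  ultimately obtain w where "(w, d) \<in> ind_rel E D"
    by (metis rtranclE)
  then have w: "w \<in> D" "{w, d} \<in> E" unfolding ind_rel_def by simp_all
  \<comment> \<open>d is latest in D, so the edge wd forces d to be dominating\<close>
  have "dominating d"
    using adjacent_iff[of w d] w d assms(2) by (meson not_le subsetD)
  then show ?thesis using that d by blast
qed

section \<open>Connected components\<close>

lemma ind_rel_sym: "sym (ind_rel E S)"
  unfolding sym_def ind_rel_def by (auto simp: insert_commute)

lemma rtrancl_ind_rel_sym: "(x, y) \<in> (ind_rel E S)\<^sup>* \<Longrightarrow> (y, x) \<in> (ind_rel E S)\<^sup>*"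
  by (rule symD[OF sym_rtrancl[OF ind_rel_sym]])

lemma rtrancl_ind_rel_in: "(x, y) \<in> (ind_rel E S)\<^sup>* \<Longrightarrow> x \<in> S \<Longrightarrow> y \<in> S"
  by (induction rule: rtrancl_induct) (auto simp: ind_rel_def)

lemma component_subset: "K \<in> components E S \<Longrightarrow> K \<subseteq> S"
  unfolding components_def by auto

lemma component_eq:
  assumes "K \<in> components E S" "x \<in> K"
  shows "K = {y \<in> S. (x, y) \<in> (ind_rel E S)\<^sup>*}"
proof -
  obtain u where u: "K = {v \<in> S. (u, v) \<in> (ind_rel E S)\<^sup>*}"
    using assms(1) unfolding components_def by blast
  then have ux: "(u, x) \<in> (ind_rel E S)\<^sup>*" using assms(2) by blast
  then have xu: "(x, u) \<in> (ind_rel E S)\<^sup>*" by (rule rtrancl_ind_rel_sym)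
  have "(u, v) \<in> (ind_rel E S)\<^sup>* \<longleftrightarrow> (x, v) \<in> (ind_rel E S)\<^sup>*" for v
    using rtrancl_trans[OF ux] rtrancl_trans[OF xu] by blast
  then show ?thesis unfolding u by blast
qed

lemma components_disjoint:
  "K \<in> components E S \<Longrightarrow> K' \<in> components E S \<Longrightarrow> x \<in> K \<Longrightarrow> x \<in> K' \<Longrightarrow> K = K'"
  using component_eq[of K E S x] component_eq[of K' E S x] by simp

lemma components_cover: "x \<in> S \<Longrightarrow> \<exists>K \<in> components E S. x \<in> K"
  unfolding components_def by (intro bexI[of _ "{y \<in> S. (x, y) \<in> (ind_rel E S)\<^sup>*}"]) auto

lemma component_adjacent:
  assumes "K \<in> components E S" "x \<in> K" "y \<in> S" "{x, y} \<in> E"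
  shows "y \<in> K"
proof -
  have "x \<in> S" using assms(1,2) component_subset by blast
  then have "(x, y) \<in> ind_rel E S" using assms(3,4) by (simp add: ind_rel_def)
  then show ?thesis using component_eq[OF assms(1,2)] assms(3) by blast
qed

lemma components_empty: "components E {} = {}"
  unfolding components_def by simp

lemma components_connected:
  assumes "connected_in E S"
  shows "components E S = {S}"
proof -
  have "{v \<in> S. (u, v) \<in> (ind_rel E S)\<^sup>*} = S" if "u \<in> S" for u
    using assms that unfolding connected_in_def by blast
  moreover have "S \<noteq> {}" using assms unfolding connected_in_def by blast
  ultimately show ?thesis unfolding components_def by blast
qed

lemma connected_component:
  assumes "K \<in> components E S"
  shows "connected_in E K"
proof -
  obtain u where u: "u \<in> S" "K = {v \<in> S. (u, v) \<in> (ind_rel E S)\<^sup>*}"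
    using assms unfolding components_def by blast
  have path: "(u, v) \<in> (ind_rel E K)\<^sup>*" if "(u, v) \<in> (ind_rel E S)\<^sup>*" for v
    using that
  proof (induction rule: rtrancl_induct)
    case (step y z)
    have "(u, z) \<in> (ind_rel E S)\<^sup>*" using step.hyps by simp
    then have "y \<in> K" "z \<in> K"
      using u step.hyps(1) rtrancl_ind_rel_in[of u _ E S] by blast+
    then have "(y, z) \<in> ind_rel E K" using step.hyps(2) by (simp add: ind_rel_def)
    then show ?case using step.IH by simp
  qed simp
  show ?thesis unfolding connected_in_def
  proof (intro conjI ballI)
    show "K \<noteq> {}" using u by blast
    fix x y assume "x \<in> K" "y \<in> K"
    then have "(u, x) \<in> (ind_rel E K)\<^sup>*" "(u, y) \<in> (ind_rel E K)\<^sup>*" using u path by auto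
    then show "(x, y) \<in> (ind_rel E K)\<^sup>*" using rtrancl_ind_rel_sym rtrancl_trans by metis
  qed
qed

lemma connected_in_star:
  assumes "w \<in> S" "\<And>x. x \<in> S \<Longrightarrow> x \<noteq> w \<Longrightarrow> {x, w} \<in> E"
  shows "connected_in E S"
proof -
  have "(x, w) \<in> (ind_rel E S)\<^sup>*" if "x \<in> S" for x
    using that assms by (cases "x = w") (auto simp: ind_rel_def)
  then have "(x, y) \<in> (ind_rel E S)\<^sup>*" if "x \<in> S" "y \<in> S" for x y
    using that rtrancl_ind_rel_sym rtrancl_trans by metis
  then show ?thesis unfolding connected_in_def using assms(1) by blast
qed

section \<open>Search trees\<close>

lemma desc_refl: "z \<in> desc P z"
  unfolding desc_def by simp

lemma desc_mono: "P \<subseteq> Q \<Longrightarrow> desc P z \<subseteq> desc Q z"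
  unfolding desc_def using rtrancl_mono by blast

lemma desc_trans: "y \<in> desc P z \<Longrightarrow> x \<in> desc P y \<Longrightarrow> x \<in> desc P z"
  unfolding desc_def by simp

lemma desc_leaf: "(\<And>y. (y, x) \<notin> P) \<Longrightarrow> desc P x = {x}"
  unfolding desc_def by (auto elim: rtranclE)

text \<open>The depth function only serves to make the parent relation well-founded towards
  the root.\<close>
locale search_tree_struct =
  fixes E :: "'a set set" and V :: "'a set" and r :: 'a and P :: "('a \<times> 'a) set"
  assumes root_in_V: "r \<in> V"
    and child_in_V: "(x, y) \<in> P \<Longrightarrow> x \<in> V"
    and parent_in_V: "(x, y) \<in> P \<Longrightarrow> y \<in> V"
    and parent_unique: "(x, y) \<in> P \<Longrightarrow> (x, y') \<in> P \<Longrightarrow> y = y'"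
    and reaches_root: "x \<in> V \<Longrightarrow> (x, r) \<in> P\<^sup>*"
    and depth_exists: "\<exists>depth :: 'a \<Rightarrow> nat. \<forall>x y. (x, y) \<in> P \<longrightarrow> depth y < depth x"
    and connected: "connected_in E V"
    and child_subtree_component: "(c, z) \<in> P \<Longrightarrow> desc P c \<in> components E (desc P z - {z})"

context search_tree_struct
begin

definition depth :: "'a \<Rightarrow> nat" where
  "depth = (SOME d. \<forall>x y. (x, y) \<in> P \<longrightarrow> d y < d x)"

lemma depth_less: "(x, y) \<in> P \<Longrightarrow> depth y < depth x"
  using someI_ex[OF depth_exists] unfolding depth_def by blast

lemma depth_less_trancl: "(x, y) \<in> P\<^sup>+ \<Longrightarrow> depth y < depth x"
  by (induction rule: trancl_induct) (auto dest: depth_less)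

lemma no_cycle: "(x, x) \<notin> P\<^sup>+"
  using depth_less_trancl by blast

lemma parent_ne: "(x, y) \<in> P \<Longrightarrow> x \<noteq> y"
  using no_cycle by blast

lemma root_no_parent: "(r, y) \<notin> P"
proof
  assume "(r, y) \<in> P"
  moreover have "(y, r) \<in> P\<^sup>*" using reaches_root parent_in_V calculation by blast
  ultimately show False using no_cycle by (meson rtrancl_into_trancl2)
qed

lemma desc_root: "desc P r = V"
proof -
  have "y \<in> V" if "(y, r) \<in> P\<^sup>*" for y
    using that root_in_V child_in_V by (cases rule: converse_rtranclE) blast+
  then show ?thesis using reaches_root unfolding desc_def by blast
qed

end

locale search_tree_glue =
  fixes E :: "'a set set" and V :: "'a set" and r :: 'a
    and root :: "'a set \<Rightarrow> 'a" and parent :: "'a set \<Rightarrow> ('a \<times> 'a) set"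
  assumes root_in_V: "r \<in> V"
    and connected: "connected_in E V"
    and component_trees: "C \<in> components E (V - {r}) \<Longrightarrow>
      root C \<in> C \<and> search_tree_struct E C (root C) (parent C)"
begin

abbreviation "Cs \<equiv> components E (V - {r})"

definition glued :: "('a \<times> 'a) set" where
  "glued = (\<Union>C \<in> Cs. insert (root C, r) (parent C))"

lemma glued_iff: "(x, y) \<in> glued \<longleftrightarrow> (\<exists>C\<in>Cs. x = root C \<and> y = r \<or> (x, y) \<in> parent C)"
  unfolding glued_def by blast

lemma component_struct: "C \<in> Cs \<Longrightarrow> search_tree_struct E C (root C) (parent C)"
  using component_trees by blast

lemma component_root: "C \<in> Cs \<Longrightarrow> root C \<in> C"
  using component_trees by blast

lemma component_in_V: "C \<in> Cs \<Longrightarrow> C \<subseteq> V - {r}"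
  by (rule component_subset)

lemma parent_subset_glued: "C \<in> Cs \<Longrightarrow> parent C \<subseteq> glued"
  unfolding glued_def by blast

lemma parent_edge_in_component: "C \<in> Cs \<Longrightarrow> (x, y) \<in> parent C \<Longrightarrow> x \<in> C \<and> y \<in> C"
  using component_struct search_tree_struct.child_in_V search_tree_struct.parent_in_V by metis

lemma glued_edge_into_component:
  assumes "C \<in> Cs" "y \<in> C" "(x, y) \<in> glued"
  shows "(x, y) \<in> parent C"
proof -
  obtain C' where C': "C' \<in> Cs" "x = root C' \<and> y = r \<or> (x, y) \<in> parent C'"
    using assms(3) glued_iff by blast
  have "y \<noteq> r" using assms(1,2) component_in_V by blast
  then have "(x, y) \<in> parent C'" using C'(2) by blast
  moreover have "C' = C"
    using components_disjoint[OF C'(1) assms(1)] parent_edge_in_component[OF C'(1)] calculation assms(2)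
    by blast
  ultimately show ?thesis by simp
qed

lemma desc_glued:
  assumes "C \<in> Cs" "z \<in> C"
  shows "desc glued z = desc (parent C) z"
proof
  have "(y, z) \<in> (parent C)\<^sup>*" if "(y, z) \<in> glued\<^sup>*" for y
    using that
  proof (induction rule: converse_rtrancl_induct)
    case (step y y')
    have "y' \<in> C"
      using step.IH assms parent_edge_in_component by (cases rule: converse_rtranclE) blast+
    then have "(y, y') \<in> parent C" using glued_edge_into_component assms(1) step.hyps(1) by blast
    then show ?case using step.IH by (rule converse_rtrancl_into_rtrancl)
  qed simp
  then show "desc glued z \<subseteq> desc (parent C) z" unfolding desc_def by blast
  show "desc (parent C) z \<subseteq> desc glued z" by (rule desc_mono[OF parent_subset_glued[OF assms(1)]])
qed

lemma glued_in_V: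
  assumes "(x, y) \<in> glued"
  shows "x \<in> V - {r}" "y \<in> V"
proof -
  obtain C where C: "C \<in> Cs" "x = root C \<and> y = r \<or> (x, y) \<in> parent C"
    using assms glued_iff by blast
  then have "x \<in> C" "y \<in> C \<or> y = r"
    using component_root parent_edge_in_component by blast+
  then show "x \<in> V - {r}" "y \<in> V" using component_in_V[OF C(1)] root_in_V by blast+
qed

lemma glued_parent_unique:
  assumes "(x, y) \<in> glued" "(x, y') \<in> glued"
  shows "y = y'"
proof -
  have edge_cases: "y = r \<and> x = root C \<or> (x, y) \<in> parent C"
    if C: "C \<in> Cs" "x \<in> C" and xy: "(x, y) \<in> glued" for C y
  proof -
    obtain C' where C': "C' \<in> Cs" "x = root C' \<and> y = r \<or> (x, y) \<in> parent C'"
      using xy glued_iff by blast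
    then have "x \<in> C'" using component_root parent_edge_in_component by blast
    then show ?thesis using components_disjoint[OF C'(1) C(1)] C(2) C'(2) by blast
  qed
  obtain C where C: "C \<in> Cs" "x \<in> C"
    using components_cover[OF glued_in_V(1)[OF assms(1)]] by blast
  show ?thesis
    using edge_cases[OF C assms(1)] edge_cases[OF C assms(2)]
      search_tree_struct.root_no_parent[OF component_struct[OF C(1)]]
      search_tree_struct.parent_unique[OF component_struct[OF C(1)]] by metis
qed

lemma glued_reaches_root:
  assumes "x \<in> V"
  shows "(x, r) \<in> glued\<^sup>*"
proof (cases "x = r")
  case False
  then have "x \<in> V - {r}" using assms by simp
  then obtain C where C: "C \<in> Cs" "x \<in> C" using components_cover by metis
  have "(x, root C) \<in> (parent C)\<^sup>*"
    by (rule search_tree_struct.reaches_root[OF component_struct[OF C(1)] C(2)])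
  then have "(x, root C) \<in> glued\<^sup>*" using rtrancl_mono[OF parent_subset_glued[OF C(1)]] by blast
  moreover have "(root C, r) \<in> glued" using C(1) glued_iff by blast
  ultimately show ?thesis by (rule rtrancl_into_rtrancl)
qed simp

lemma desc_glued_root: "desc glued r = V"
proof -
  have "y \<in> V" if "(y, r) \<in> glued\<^sup>*" for y
    using that root_in_V glued_in_V by (cases rule: converse_rtranclE) blast+
  then show ?thesis using glued_reaches_root unfolding desc_def by blast
qed

lemma glued_depth: "\<exists>depth :: 'a \<Rightarrow> nat. \<forall>x y. (x, y) \<in> glued \<longrightarrow> depth y < depth x"
proof -
  define d where "d C = (SOME h :: 'a \<Rightarrow> nat. \<forall>x y. (x, y) \<in> parent C \<longrightarrow> h y < h x)" for C
  have d: "d C y < d C x" if C: "C \<in> Cs" and xy: "(x, y) \<in> parent C" for C x y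
  proof -
    have "\<exists>h :: 'a \<Rightarrow> nat. \<forall>x y. (x, y) \<in> parent C \<longrightarrow> h y < h x"
      using search_tree_struct.depth_exists[OF component_struct[OF C]] .
    then have "\<forall>x y. (x, y) \<in> parent C \<longrightarrow> d C y < d C x"
      unfolding d_def by (rule someI_ex)
    then show ?thesis using xy by blast
  qed
  define comp where "comp x = (SOME C. C \<in> Cs \<and> x \<in> C)" for x
  have comp: "comp x = C" if C: "C \<in> Cs" "x \<in> C" for C x
  proof -
    have "C \<in> Cs \<and> x \<in> C" using C by blast
    then have "comp x \<in> Cs \<and> x \<in> comp x" unfolding comp_def by (rule someI)
    then show ?thesis using components_disjoint[OF C(1) _ C(2)] by blast
  qed
  define depth where "depth x = (if x = r then 0 else Suc (d (comp x) x))" for x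
  have "depth y < depth x" if xy: "(x, y) \<in> glued" for x y
  proof -
    obtain C where C: "C \<in> Cs" "x = root C \<and> y = r \<or> (x, y) \<in> parent C"
      using xy glued_iff by blast
    show ?thesis
    proof (cases "(x, y) \<in> parent C")
      case True
      then have "x \<in> C" "y \<in> C" using parent_edge_in_component C(1) by blast+
      then have "comp x = C" "comp y = C" "x \<noteq> r" "y \<noteq> r"
        using comp[OF C(1)] component_in_V[OF C(1)] by blast+
      then show ?thesis using d[OF C(1) True] by (simp add: depth_def)
    next
      case False
      then have "y = r" "x \<noteq> r" using C(2) glued_in_V[OF xy] by blast+
      then show ?thesis by (simp add: depth_def)
    qed
  qed
  then show ?thesis by blast
qed

lemma glued_child_component:
  assumes "(c, z) \<in> glued"
  shows "desc glued c \<in> components E (desc glued z - {z})"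
proof -
  obtain C where C: "C \<in> Cs" "c = root C \<and> z = r \<or> (c, z) \<in> parent C"
    using assms glued_iff by blast
  show ?thesis
  proof (cases "(c, z) \<in> parent C")
    case True
    then have "c \<in> C" "z \<in> C" using parent_edge_in_component C(1) by blast+
    then show ?thesis
      using desc_glued C(1) search_tree_struct.child_subtree_component[OF component_struct True]
      by simp
  next
    case False
    then have "c = root C" "z = r" using C(2) by blast+
    moreover have "desc (parent C) (root C) = C"
      using search_tree_struct.desc_root[OF component_struct[OF C(1)]] .
    ultimately show ?thesis
      using desc_glued[OF C(1)] component_root[OF C(1)] desc_glued_root C(1) by simp
  qed
qed

lemma search_tree_struct_glued: "search_tree_struct E V r glued"
proof
  show "r \<in> V" by (rule root_in_V)
  show "connected_in E V" by (rule connected)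
  fix x y y' c z
  show "(x, y) \<in> glued \<Longrightarrow> x \<in> V" "(x, y) \<in> glued \<Longrightarrow> y \<in> V"
    using glued_in_V by blast+
  show "(x, y) \<in> glued \<Longrightarrow> (x, y') \<in> glued \<Longrightarrow> y = y'" by (rule glued_parent_unique)
  show "x \<in> V \<Longrightarrow> (x, r) \<in> glued\<^sup>*" by (rule glued_reaches_root)
  show "\<exists>depth :: 'a \<Rightarrow> nat. \<forall>x y. (x, y) \<in> glued \<longrightarrow> depth y < depth x" by (rule glued_depth)
  show "(c, z) \<in> glued \<Longrightarrow> desc glued c \<in> components E (desc glued z - {z})"
    by (rule glued_child_component)
qed

end

lemma search_tree_imp_struct: "search_tree E V r P \<Longrightarrow> search_tree_struct E V r P"
proof (induction rule: search_tree.induct)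
  case (1 r V root parent P)
  interpret search_tree_glue E V r root parent
    using 1 by unfold_locales blast+
  show ?case using search_tree_struct_glued 1(3) by (simp add: glued_def)
qed

definition ancestors :: "('a \<times> 'a) set \<Rightarrow> 'a \<Rightarrow> 'a set" where
  "ancestors P z = {a. (z, a) \<in> P\<^sup>+}"

lemma ancestors_no_parent: "(\<And>y. (z, y) \<notin> P) \<Longrightarrow> ancestors P z = {}"
  unfolding ancestors_def by (auto elim: converse_tranclE)

lemma desc_eq_ancestors: "desc P z = insert z {y. z \<in> ancestors P y}"
  unfolding desc_def ancestors_def by (auto simp: rtrancl_eq_or_trancl)

lemma child_in_desc: "(c, z) \<in> P \<Longrightarrow> c \<in> desc P z"
  unfolding desc_def by auto

lemma desc_child_closed: "(x, y) \<in> P \<Longrightarrow> y \<in> desc P c \<Longrightarrow> x \<in> desc P c"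
  unfolding desc_def by (auto intro: converse_rtrancl_into_rtrancl)

context search_tree_struct
begin

lemma ancestors_parent:
  assumes "(z, y) \<in> P"
  shows "ancestors P z = insert y (ancestors P y)"
proof
  show "ancestors P z \<subseteq> insert y (ancestors P y)"
  proof
    fix a assume "a \<in> ancestors P z"
    then have "(z, a) \<in> P\<^sup>+" unfolding ancestors_def by simp
    then obtain w where "(z, w) \<in> P" "(w, a) \<in> P\<^sup>*" by (blast dest: tranclD)
    moreover have "w = y" using parent_unique[OF assms calculation(1)] by simp
    ultimately show "a \<in> insert y (ancestors P y)"
      unfolding ancestors_def by (auto simp: rtrancl_eq_or_trancl)
  qed
  show "insert y (ancestors P y) \<subseteq> ancestors P z"
    unfolding ancestors_def using assms by (auto intro: trancl_into_trancl2)
qed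

lemma ancestors_iff_desc: "a \<in> ancestors P z \<longleftrightarrow> z \<in> desc P a \<and> z \<noteq> a"
proof
  assume "a \<in> ancestors P z"
  then have "(z, a) \<in> P\<^sup>+" unfolding ancestors_def by simp
  then show "z \<in> desc P a \<and> z \<noteq> a" unfolding desc_def using no_cycle by auto
next
  assume "z \<in> desc P a \<and> z \<noteq> a"
  then show "a \<in> ancestors P z" unfolding desc_def ancestors_def by (auto simp: rtrancl_eq_or_trancl)
qed

lemma ancestor_not_desc:
  assumes "a \<in> ancestors P z"
  shows "a \<notin> desc P z"
proof
  assume "a \<in> desc P z"
  then have "(z, a) \<in> P\<^sup>+" "(a, z) \<in> P\<^sup>*" using assms unfolding ancestors_def desc_def by simp_all
  then have "(z, z) \<in> P\<^sup>+" by simp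
  then show False using no_cycle by blast
qed

lemma ancestors_subset_V: "ancestors P z \<subseteq> V"
  unfolding ancestors_def using parent_in_V by (auto elim: tranclE)

lemma finite_ancestors: "finite V \<Longrightarrow> finite (ancestors P z)"
  using ancestors_subset_V finite_subset by blast

lemma desc_subset_V: "z \<in> V \<Longrightarrow> desc P z \<subseteq> V"
  unfolding desc_def using child_in_V by (auto elim: converse_rtranclE)

lemma child_desc_subset: "(c, z) \<in> P \<Longrightarrow> desc P c \<subseteq> desc P z - {z}"
  using child_subtree_component component_subset by blast

lemma connected_subtree:
  assumes "z \<in> V"
  shows "connected_in E (desc P z)"
proof (cases "\<exists>y. (z, y) \<in> P")
  case True
  then show ?thesis using child_subtree_component connected_component by blast
next
  case False
  then have "z = r" using reaches_root[OF assms] by (auto elim: converse_rtranclE)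
  then show ?thesis using desc_root connected by simp
qed

lemma desc_parent:
  assumes "x \<in> desc P c" "x \<noteq> c" "(x, y) \<in> P"
  shows "y \<in> desc P c"
proof -
  have "(x, c) \<in> P\<^sup>+" using assms(1,2) unfolding desc_def by (simp add: rtrancl_eq_or_trancl)
  then obtain w where "(x, w) \<in> P" "(w, c) \<in> P\<^sup>*" by (blast dest: tranclD)
  then show ?thesis using parent_unique[OF assms(3)] unfolding desc_def by simp
qed

lemma desc_has_parent:
  assumes "y \<in> desc P z" "y \<noteq> z"
  obtains w where "(y, w) \<in> P"
proof -
  have "(y, z) \<in> P\<^sup>+" using assms unfolding desc_def by (simp add: rtrancl_eq_or_trancl)
  then show ?thesis using that by (blast dest: tranclD)
qed

lemma desc_in_child_subtree:
  assumes "y \<in> desc P z" "y \<noteq> z"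
  obtains c where "(c, z) \<in> P" "y \<in> desc P c"
proof -
  have "(y, z) \<in> P\<^sup>+" using assms unfolding desc_def by (auto simp: rtrancl_eq_or_trancl)
  then obtain c where "(y, c) \<in> P\<^sup>*" "(c, z) \<in> P" by (blast dest: tranclD2)
  then show ?thesis using that unfolding desc_def by blast
qed

lemma child_subtrees_disjoint:
  assumes "(c, z) \<in> P" "(c', z) \<in> P" "c \<noteq> c'" "x \<in> desc P c"
  shows "x \<notin> desc P c'"
proof
  assume "x \<in> desc P c'"
  then have "desc P c = desc P c'"
    using components_disjoint[OF child_subtree_component[OF assms(1)]
        child_subtree_component[OF assms(2)] assms(4)] by blast
  then have "(c, c') \<in> P\<^sup>*" "(c', c) \<in> P\<^sup>*" using desc_refl unfolding desc_def by fast+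
  then have "(c, c) \<in> P\<^sup>+" using assms(3) by (metis rtrancl_eq_or_trancl rtrancl_trancl_trancl)
  then show False using no_cycle by blast
qed

lemma no_edge_out_of_child_subtree:
  assumes "(c, z) \<in> P" "x \<in> desc P c" "y \<in> desc P z" "y \<noteq> z" "y \<notin> desc P c"
  shows "{x, y} \<notin> E"
  using component_adjacent[OF child_subtree_component[OF assms(1)] assms(2)] assms(3-5) by blast

end

section \<open>Ancestors after a rotation\<close>

locale rotation = T: search_tree_struct E V r P + T': search_tree_struct E V r' P'
  for E :: "'a set set" and V r P r' P' +
  fixes u v :: 'a
  assumes child: "(v, u) \<in> P"
    and rotated: "rotate E (r, P) u v = (r', P')"
begin

definition moved :: "'a set" where
  "moved = {c. (c, v) \<in> P \<and> (\<exists>s\<in>desc P c. {u, s} \<in> E)}"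

definition kept :: "'a set" where
  "kept = {z. \<exists>c. (c, v) \<in> P \<and> c \<notin> moved \<and> z \<in> desc P c}"

definition ancestors_rotated :: "'a \<Rightarrow> 'a set" where
  "ancestors_rotated z =
    (if z = v then ancestors P u
     else if z \<in> kept then ancestors P z - {u}
     else if z \<in> desc P u - desc P v then insert v (ancestors P z)
     else ancestors P z)"

lemma rotated_parent_iff:
  "(x, y) \<in> P' \<longleftrightarrow> (x, y) \<in> P \<and> x \<noteq> u \<and> x \<noteq> v \<and> \<not> (y = v \<and> x \<in> moved)
    \<or> y = u \<and> x \<in> moved \<or> x = u \<and> y = v \<or> x = v \<and> (u, y) \<in> P"
proof -
  have "P' = snd (rotate E (r, P) u v)" using rotated by simp
  then show ?thesis unfolding rotate_def Let_def moved_def by auto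
qed

lemma u_ne_v: "u \<noteq> v"
  using T.parent_ne[OF child] by simp

lemma desc_v_subset: "desc P v \<subseteq> desc P u - {u}"
  using T.child_desc_subset[OF child] .

lemma v_in_desc_u: "v \<in> desc P u"
  using child_in_desc[OF child] .

lemma ancestors_v: "ancestors P v = insert u (ancestors P u)"
  using T.ancestors_parent[OF child] .

lemma u_notin_ancestors_u: "u \<notin> ancestors P u"
  using T.ancestor_not_desc desc_refl by metis

lemma v_notin_ancestors_u: "v \<notin> ancestors P u"
  using T.ancestors_iff_desc desc_v_subset by blast

lemma kept_subset: "kept \<subseteq> desc P v - {v}"
  unfolding kept_def using T.child_desc_subset by blast

lemma moved_not_kept:
  assumes "c \<in> moved" "z \<in> desc P c"
  shows "z \<notin> kept"
proof
  assume "z \<in> kept"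
  then obtain c' where c': "(c', v) \<in> P" "c' \<notin> moved" "z \<in> desc P c'" unfolding kept_def by blast
  have "(c, v) \<in> P" using assms(1) unfolding moved_def by blast
  moreover have "c \<noteq> c'" using assms(1) c'(2) by blast
  ultimately show False using T.child_subtrees_disjoint c' assms(2) by blast
qed

lemma kept_parent_iff:
  assumes "(z, y) \<in> P" "y \<noteq> v" "z \<in> desc P v"
  shows "z \<in> kept \<longleftrightarrow> y \<in> kept"
proof
  assume "z \<in> kept"
  then obtain c where c: "(c, v) \<in> P" "c \<notin> moved" "z \<in> desc P c" unfolding kept_def by blast
  have "z \<noteq> c" using c(1) assms(1,2) T.parent_unique by blast
  then have "y \<in> desc P c" using T.desc_parent[OF c(3) _ assms(1)] by blast
  then show "y \<in> kept" unfolding kept_def using c by blast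
next
  assume "y \<in> kept"
  then show "z \<in> kept" unfolding kept_def using desc_child_closed[OF assms(1)] by blast
qed

lemma ancestors_rotated_outside: "z \<notin> desc P u \<Longrightarrow> ancestors_rotated z = ancestors P z"
  using kept_subset desc_v_subset v_in_desc_u unfolding ancestors_rotated_def by auto

lemma ancestors_rotated_v: "ancestors_rotated v = ancestors P u"
  unfolding ancestors_rotated_def by simp

lemma ancestors_rotated_u: "ancestors_rotated u = insert v (ancestors P u)"
  using u_ne_v kept_subset desc_v_subset desc_refl[of u P] unfolding ancestors_rotated_def by auto

lemma ancestors_rotated_old_edge:
  assumes zy: "(z, y) \<in> P" and "z \<noteq> u" "z \<noteq> v" and not_moved: "\<not> (y = v \<and> z \<in> moved)"
  shows "ancestors_rotated z = insert y (ancestors_rotated y)"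
proof -
  have anc_z: "ancestors P z = insert y (ancestors P y)" by (rule T.ancestors_parent[OF zy])
  consider (outside) "z \<notin> desc P u" | (between) "z \<in> desc P u - desc P v" | (below_v) "z \<in> desc P v"
    by blast
  then show ?thesis
  proof cases
    case outside
    then have "y \<notin> desc P u" using desc_child_closed[OF zy] by blast
    then show ?thesis using outside anc_z ancestors_rotated_outside by simp
  next
    case between
    then have "y \<in> desc P u - desc P v"
      using T.desc_parent[OF _ \<open>z \<noteq> u\<close> zy] desc_child_closed[OF zy] by blast
    then have "y \<noteq> v" "y \<notin> kept" using desc_refl[of v P] kept_subset by blast+
    moreover have "z \<notin> kept" using between kept_subset by blast
    ultimately show ?thesis
      using \<open>y \<in> desc P u - desc P v\<close> between anc_z \<open>z \<noteq> v\<close>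
      unfolding ancestors_rotated_def by auto
  next
    case below_v
    show ?thesis
    proof (cases "y = v")
      case True
      then have "z \<in> kept" using zy not_moved desc_refl[of z P] unfolding kept_def by blast
      then have "ancestors_rotated z = ancestors P z - {u}"
        using \<open>z \<noteq> v\<close> unfolding ancestors_rotated_def by simp
      also have "\<dots> = insert v (ancestors P u)"
        using anc_z True ancestors_v u_notin_ancestors_u u_ne_v by auto
      finally show ?thesis using True unfolding ancestors_rotated_def by simp
    next
      case False
      then have "y \<in> desc P v" "y \<noteq> u"
        using T.desc_parent[OF below_v \<open>z \<noteq> v\<close> zy] desc_v_subset by blast+
      moreover have "z \<in> kept \<longleftrightarrow> y \<in> kept" by (rule kept_parent_iff[OF zy False below_v])
      ultimately show ?thesis
        using below_v False \<open>z \<noteq> v\<close> anc_z unfolding ancestors_rotated_def by auto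
    qed
  qed
qed

lemma ancestors_rotated_parent:
  assumes "(z, y) \<in> P'"
  shows "ancestors_rotated z = insert y (ancestors_rotated y)"
proof -
  consider (old_edge) "(z, y) \<in> P" "z \<noteq> u" "z \<noteq> v" "\<not> (y = v \<and> z \<in> moved)"
    | (moved) "y = u" "z \<in> moved" | (u_below_v) "z = u" "y = v" | (v_up) "z = v" "(u, y) \<in> P"
    using assms rotated_parent_iff[of z y] by blast
  then show ?thesis
  proof cases
    case old_edge
    then show ?thesis by (rule ancestors_rotated_old_edge)
  next
    case moved
    then have zv: "(z, v) \<in> P" unfolding moved_def by blast
    then have "z \<in> desc P v" "z \<noteq> v" "z \<notin> kept"
      using child_in_desc[OF zv] T.parent_ne[OF zv] moved_not_kept[OF moved(2) desc_refl] by blast+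
    then have "ancestors_rotated z = ancestors P z" unfolding ancestors_rotated_def by simp
    also have "\<dots> = insert u (ancestors_rotated u)"
      using T.ancestors_parent[OF zv] ancestors_v ancestors_rotated_u by auto
    finally show ?thesis using moved(1) by simp
  next
    case u_below_v
    then show ?thesis using ancestors_rotated_u ancestors_rotated_v by simp
  next
    case v_up
    then have "y \<in> ancestors P u" using T.ancestors_parent[OF v_up(2)] by blast
    then have "y \<notin> desc P u" by (rule T.ancestor_not_desc)
    then show ?thesis
      using v_up T.ancestors_parent[OF v_up(2)] ancestors_rotated_outside
      unfolding ancestors_rotated_def by simp
  qed
qed

lemma ancestors_rotated_root:
  assumes no_parent: "\<And>y. (z, y) \<notin> P'"
  shows "ancestors_rotated z = {}"
proof (cases "z = v")
  case True
  then have "(u, y) \<notin> P" for y using no_parent[of y] rotated_parent_iff[of v y] by blast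
  then have "ancestors P u = {}" by (rule ancestors_no_parent)
  then show ?thesis using True unfolding ancestors_rotated_def by simp
next
  case False
  have "z \<noteq> u" using no_parent[of v] rotated_parent_iff[of u v] by blast
  moreover have "z \<notin> moved" using no_parent[of u] rotated_parent_iff[of z u] by blast
  ultimately have no_old_parent: "(z, y) \<notin> P" for y
    using no_parent[of y] rotated_parent_iff[of z y] False by blast
  then have "z \<notin> desc P u" using \<open>z \<noteq> u\<close> T.desc_has_parent by blast
  moreover have "ancestors P z = {}" using no_old_parent by (rule ancestors_no_parent)
  ultimately show ?thesis using ancestors_rotated_outside by simp
qed

lemma ancestors_rotated: "ancestors P' z = ancestors_rotated z"
proof (induction "T'.depth z" arbitrary: z rule: less_induct)
  case less
  show ?case
  proof (cases "\<exists>y. (z, y) \<in> P'")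
    case True
    then obtain y where zy: "(z, y) \<in> P'" by blast
    have "ancestors P' z = insert y (ancestors P' y)" by (rule T'.ancestors_parent[OF zy])
    also have "ancestors P' y = ancestors_rotated y" by (rule less[OF T'.depth_less[OF zy]])
    finally show ?thesis using ancestors_rotated_parent[OF zy] by simp
  next
    case False
    then show ?thesis using ancestors_no_parent ancestors_rotated_root by metis
  qed
qed

lemma in_ancestors_rotated_iff:
  "a \<noteq> u \<Longrightarrow> a \<noteq> v \<Longrightarrow> a \<in> ancestors_rotated z \<longleftrightarrow> a \<in> ancestors P z"
  using ancestors_v unfolding ancestors_rotated_def by auto

lemma v_in_ancestors_rotated_iff: "v \<in> ancestors_rotated y \<longleftrightarrow> y \<in> desc P u \<and> y \<noteq> v"
  using T.ancestors_iff_desc[of v y] kept_subset desc_v_subset v_notin_ancestors_u u_ne_v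
  unfolding ancestors_rotated_def by auto

lemma u_in_ancestors_rotated_iff:
  "u \<in> ancestors_rotated y \<longleftrightarrow> y \<in> desc P u - insert u (insert v kept)"
  using T.ancestors_iff_desc[of u y] kept_subset desc_v_subset u_notin_ancestors_u u_ne_v
  unfolding ancestors_rotated_def by auto

lemma desc_rotated_other: "z \<noteq> u \<Longrightarrow> z \<noteq> v \<Longrightarrow> desc P' z = desc P z"
  using desc_eq_ancestors[of P' z] desc_eq_ancestors[of P z] ancestors_rotated
    in_ancestors_rotated_iff by simp

lemma desc_rotated_v: "desc P' v = desc P u"
  using desc_eq_ancestors[of P' v] ancestors_rotated v_in_ancestors_rotated_iff v_in_desc_u by auto

lemma desc_rotated_u: "desc P' u = desc P u - insert v kept"
  using desc_eq_ancestors[of P' u] ancestors_rotated u_in_ancestors_rotated_iff u_ne_v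
    desc_refl[of u P] kept_subset desc_v_subset by auto

end

section \<open>A proper 3-colouring of the rotation graph\<close>

definition has_later_desc :: "('a \<Rightarrow> nat) \<Rightarrow> ('a \<times> 'a) set \<Rightarrow> 'a \<Rightarrow> bool" where
  "has_later_desc pos P z \<longleftrightarrow> (\<exists>y\<in>desc P z. pos z < pos y)"

definition later_iff_adjacent :: "('a \<Rightarrow> nat) \<Rightarrow> 'a set set \<Rightarrow> 'a \<Rightarrow> 'a \<Rightarrow> bool" where
  "later_iff_adjacent pos E a z \<longleftrightarrow> (pos z < pos a \<longleftrightarrow> {a, z} \<in> E)"

definition vertex_weight :: "('a \<Rightarrow> nat) \<Rightarrow> 'a set set \<Rightarrow> ('a \<times> 'a) set \<Rightarrow> 'a \<Rightarrow> nat" where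
  "vertex_weight pos E P z =
    (if has_later_desc pos P z
     then 1 + card {a \<in> ancestors P z. later_iff_adjacent pos E a z} mod 2 else 0)"

definition tree_colour :: "('a \<Rightarrow> nat) \<Rightarrow> 'a set set \<Rightarrow> 'a set \<Rightarrow> 'a rtree \<Rightarrow> nat" where
  "tree_colour pos E V T = (\<Sum>z\<in>V. vertex_weight pos E (snd T) z) mod 3"

lemma vertex_weight_le: "vertex_weight pos E P z \<le> 2"
  unfolding vertex_weight_def by auto

lemma card_filter_insert:
  assumes "finite A" "x \<notin> A"
  shows "card {a \<in> insert x A. Q a} = card {a \<in> A. Q a} + (if Q x then 1 else 0)"
proof -
  have "{a \<in> insert x A. Q a} = (if Q x then insert x {a \<in> A. Q a} else {a \<in> A. Q a})" by auto
  then show ?thesis using assms by simp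
qed

lemma Suc_mod_two_neq: "Suc k mod 2 \<noteq> k mod 2"
  by presburger

lemma add_mod_three_neq:
  fixes a b c :: nat
  assumes "a \<noteq> b" "a \<le> b + 2" "b \<le> a + 2"
  shows "(a + c) mod 3 \<noteq> (b + c) mod 3"
  using assms by presburger

locale threshold_rotation =
  rotation E V r P r' P' u v + creation_sequence V E pos dominating
  for E :: "'a set set" and V r P r' P' u v and pos :: "'a \<Rightarrow> nat" and dominating
begin

lemma u_in_V: "u \<in> V"
  using T.parent_in_V[OF child] .

lemma v_in_V: "v \<in> V"
  using T.child_in_V[OF child] .

text \<open>Otherwise z, having no edge to a, would come after a; then so would the latest vertex
  of the subtree of c, which is dominating and hence adjacent to a.\<close>
lemma not_later_iff_adjacent_if_separated:
  assumes c: "c \<in> V" "z \<in> desc P c" and later: "has_later_desc pos P z"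
    and a: "a \<in> V" "\<And>s. s \<in> desc P c \<Longrightarrow> {a, s} \<notin> E"
  shows "\<not> later_iff_adjacent pos E a z"
proof
  assume agree: "later_iff_adjacent pos E a z"
  obtain y where y: "y \<in> desc P z" "pos z < pos y"
    using later unfolding has_later_desc_def by blast
  obtain d where d: "d \<in> desc P c" "dominating d" "\<And>x. x \<in> desc P c \<Longrightarrow> pos x \<le> pos d"
    using latest_vertex_dominating[OF T.connected_subtree[OF c(1)] T.desc_subset_V[OF c(1)]
        c(2) desc_trans[OF c(2) y(1)] y(2)] by blast
  have "\<not> pos z < pos a"
    using agree a(2)[OF c(2)] unfolding later_iff_adjacent_def by simp
  then have "pos a < pos d" using y(2) d(3)[OF desc_trans[OF c(2) y(1)]] by simp
  then have "{a, d} \<in> E"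
    using adjacent_later_dominating a(1) T.desc_subset_V[OF c(1)] d(1,2) by blast
  then show False using a(2)[OF d(1)] by simp
qed

lemma kept_not_later_iff_adjacent_u:
  assumes "z \<in> kept" "has_later_desc pos P z"
  shows "\<not> later_iff_adjacent pos E u z"
proof -
  obtain c where c: "(c, v) \<in> P" "c \<notin> moved" "z \<in> desc P c" using assms(1) unfolding kept_def by blast
  show ?thesis
  proof (rule not_later_iff_adjacent_if_separated[OF _ c(3) assms(2) u_in_V])
    show "c \<in> V" using T.child_in_V[OF c(1)] .
    show "{u, s} \<notin> E" if "s \<in> desc P c" for s using c(1,2) that unfolding moved_def by blast
  qed
qed

lemma between_not_later_iff_adjacent_v:
  assumes z: "z \<in> desc P u - desc P v" "z \<noteq> u" and later: "has_later_desc pos P z"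
  shows "\<not> later_iff_adjacent pos E v z"
proof -
  obtain c where c: "(c, u) \<in> P" "z \<in> desc P c"
    using T.desc_in_child_subtree z by blast
  have "c \<noteq> v" using c(2) z(1) by blast
  show ?thesis
  proof (rule not_later_iff_adjacent_if_separated[OF _ c(2) later v_in_V])
    show "c \<in> V" using T.child_in_V[OF c(1)] .
    fix s assume s: "s \<in> desc P c"
    have "s \<notin> desc P v" using T.child_subtrees_disjoint[OF c(1) child \<open>c \<noteq> v\<close> s] .
    moreover have "s \<in> desc P u" "s \<noteq> u" using T.child_desc_subset[OF c(1)] s by blast+
    ultimately show "{v, s} \<notin> E" using T.no_edge_out_of_child_subtree[OF child desc_refl] by blast
  qed
qed

lemma has_later_desc_rotated_other:
  "z \<noteq> u \<Longrightarrow> z \<noteq> v \<Longrightarrow> has_later_desc pos P' z \<longleftrightarrow> has_later_desc pos P z"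
  unfolding has_later_desc_def using desc_rotated_other by simp

lemma vertex_weight_rotated_other:
  assumes "z \<noteq> u" "z \<noteq> v"
  shows "vertex_weight pos E P' z = vertex_weight pos E P z"
proof (cases "has_later_desc pos P z")
  case later: True
  have "{a \<in> ancestors_rotated z. later_iff_adjacent pos E a z} =
        {a \<in> ancestors P z. later_iff_adjacent pos E a z}"
  proof (cases "z \<in> kept")
    case True
    then show ?thesis
      using kept_not_later_iff_adjacent_u[OF True later] assms unfolding ancestors_rotated_def by auto
  next
    case False
    show ?thesis
    proof (cases "z \<in> desc P u - desc P v")
      case True
      then show ?thesis using between_not_later_iff_adjacent_v[OF True assms(1) later] False assms
        unfolding ancestors_rotated_def by auto
    qed (use False assms in \<open>auto simp: ancestors_rotated_def\<close>)
  qed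
  then show ?thesis
    using has_later_desc_rotated_other[OF assms] ancestors_rotated
    unfolding vertex_weight_def by simp
qed (use has_later_desc_rotated_other[OF assms] in \<open>simp add: vertex_weight_def\<close>)

lemma later_iff_adjacent_u_v: "later_iff_adjacent pos E u v \<longleftrightarrow> \<not> later_iff_adjacent pos E v u"
proof -
  have "pos u \<noteq> pos v" using pos_eq_iff u_in_V v_in_V u_ne_v by blast
  then show ?thesis unfolding later_iff_adjacent_def by (auto simp: insert_commute)
qed

lemma count_rotated_u:
  "card {a \<in> ancestors P' u. later_iff_adjacent pos E a u} =
   card {a \<in> ancestors P u. later_iff_adjacent pos E a u} + (if later_iff_adjacent pos E v u then 1 else 0)"
  using card_filter_insert[OF T.finite_ancestors[OF finite_vertices] v_notin_ancestors_u]
    ancestors_rotated ancestors_rotated_u by simp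

lemma count_rotated_v:
  "card {a \<in> ancestors P v. later_iff_adjacent pos E a v} =
   card {a \<in> ancestors P' v. later_iff_adjacent pos E a v} + (if later_iff_adjacent pos E u v then 1 else 0)"
  using card_filter_insert[OF T.finite_ancestors[OF finite_vertices] u_notin_ancestors_u]
    ancestors_rotated ancestors_rotated_v ancestors_v by simp

lemma latest_in_desc_u:
  assumes "x \<in> desc P u" "y \<in> desc P u" "pos x < pos y"
  obtains m where "m \<in> desc P u" "dominating m" "\<And>z. z \<in> desc P u \<Longrightarrow> pos z \<le> pos m"
  using latest_vertex_dominating[OF T.connected_subtree[OF u_in_V] T.desc_subset_V[OF u_in_V] assms]
  by blast

lemma weights_if_u_latest:
  assumes u_latest: "\<not> has_later_desc pos P u"
  shows "vertex_weight pos E P' u = vertex_weight pos E P u \<and>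
    vertex_weight pos E P' v \<noteq> vertex_weight pos E P v"
proof -
  have le_u: "pos y \<le> pos u" if "y \<in> desc P u" for y
    using u_latest that unfolding has_later_desc_def by force
  have u_latest': "\<not> has_later_desc pos P' u"
    using le_u desc_rotated_u unfolding has_later_desc_def by force
  have "pos v \<noteq> pos u" using pos_eq_iff u_in_V v_in_V u_ne_v by blast
  then have vu: "pos v < pos u" using le_u[OF v_in_desc_u] by simp
  obtain m where m: "m \<in> desc P u" "dominating m" "\<And>z. z \<in> desc P u \<Longrightarrow> pos z \<le> pos m"
    using latest_in_desc_u[OF v_in_desc_u desc_refl vu] by blast
  have "pos m = pos u" using le_u[OF m(1)] m(3)[OF desc_refl] by simp
  then have "m = u" using pos_eq_iff T.desc_subset_V[OF u_in_V] m(1) u_in_V by blast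
  then have "{v, u} \<in> E" using adjacent_later_dominating[OF v_in_V u_in_V vu] m(2) by simp
  then have "later_iff_adjacent pos E u v"
    using vu unfolding later_iff_adjacent_def by (simp add: insert_commute)
  then have count: "card {a \<in> ancestors P v. later_iff_adjacent pos E a v} =
      Suc (card {a \<in> ancestors P' v. later_iff_adjacent pos E a v})"
    using count_rotated_v by simp
  have "has_later_desc pos P' v"
    using desc_rotated_v desc_refl[of u P] vu unfolding has_later_desc_def by blast
  then show ?thesis
    using u_latest u_latest' count Suc_mod_two_neq[THEN not_sym] unfolding vertex_weight_def by auto
qed

lemma weights_if_v_latest:
  assumes later: "has_later_desc pos P u" and v_latest: "\<And>y. y \<in> desc P u \<Longrightarrow> pos y \<le> pos v"
  shows "vertex_weight pos E P' v = vertex_weight pos E P v \<and>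
    vertex_weight pos E P' u \<noteq> vertex_weight pos E P u"
proof -
  have "\<not> has_later_desc pos P v" "\<not> has_later_desc pos P' v"
    using v_latest desc_v_subset desc_rotated_v unfolding has_later_desc_def by force+
  moreover obtain y where y: "y \<in> desc P u" "pos u < pos y"
    using later unfolding has_later_desc_def by blast
  then have uv: "pos u < pos v" using v_latest by force
  obtain m where m: "m \<in> desc P u" "dominating m" "\<And>z. z \<in> desc P u \<Longrightarrow> pos z \<le> pos m"
    using latest_in_desc_u[OF desc_refl y] by blast
  have "pos m = pos v" using v_latest[OF m(1)] m(3)[OF v_in_desc_u] by simp
  then have "m = v" using pos_eq_iff T.desc_subset_V[OF u_in_V] m(1) v_in_V by blast
  then have "{u, v} \<in> E" using adjacent_later_dominating[OF u_in_V v_in_V uv] m(2) by simp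
  then have "later_iff_adjacent pos E v u"
    using uv unfolding later_iff_adjacent_def by (simp add: insert_commute)
  then have "card {a \<in> ancestors P' u. later_iff_adjacent pos E a u} =
      Suc (card {a \<in> ancestors P u. later_iff_adjacent pos E a u})"
    using count_rotated_u by simp
  ultimately show ?thesis
    using later Suc_mod_two_neq Suc_mod_two_neq[THEN not_sym] unfolding vertex_weight_def by auto
qed

text \<open>When the latest vertex m of the subtree of u lies strictly below v, it is adjacent to u,
  so its subtree moves to u: all four weights involved are parities, and exactly one of
  the two counts changes by one.\<close>
lemma weights_if_latest_below_v:
  assumes m: "m \<in> desc P u" "dominating m" "\<And>z. z \<in> desc P u \<Longrightarrow> pos z \<le> pos m"
    and um: "pos u < pos m" and "m \<noteq> v"
  shows "vertex_weight pos E P' u = vertex_weight pos E P u \<and>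
      vertex_weight pos E P' v \<noteq> vertex_weight pos E P v \<or>
    vertex_weight pos E P' v = vertex_weight pos E P v \<and>
      vertex_weight pos E P' u \<noteq> vertex_weight pos E P u"
proof -
  have m_in_V: "m \<in> V" using T.desc_subset_V[OF u_in_V] m(1) by blast
  have "pos v \<noteq> pos m" using pos_eq_iff v_in_V m_in_V \<open>m \<noteq> v\<close> by blast
  then have vm: "pos v < pos m" using m(3)[OF v_in_desc_u] by simp
  have m_below_v: "m \<in> desc P v"
  proof (rule ccontr)
    assume "m \<notin> desc P v"
    then have "{v, m} \<notin> E"
      using T.no_edge_out_of_child_subtree[OF child desc_refl m(1)] um by blast
    then show False using adjacent_later_dominating[OF v_in_V m_in_V vm m(2)] by simp
  qed
  obtain c where c: "(c, v) \<in> P" "m \<in> desc P c"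
    using T.desc_in_child_subtree[OF m_below_v \<open>m \<noteq> v\<close>] by blast
  have "{u, m} \<in> E" using adjacent_later_dominating[OF u_in_V m_in_V um m(2)] .
  then have "c \<in> moved" using c unfolding moved_def by blast
  then have "m \<in> desc P' u" using moved_not_kept c(2) m(1) \<open>m \<noteq> v\<close> desc_rotated_u by blast
  then have later: "has_later_desc pos P u" "has_later_desc pos P' u"
      "has_later_desc pos P v" "has_later_desc pos P' v"
    using m(1) m_below_v um vm desc_rotated_v unfolding has_later_desc_def by blast+
  show ?thesis
  proof (cases "later_iff_adjacent pos E v u")
    case True
    then have "\<not> later_iff_adjacent pos E u v" using later_iff_adjacent_u_v by simp
    then show ?thesis
      using True later count_rotated_u count_rotated_v Suc_mod_two_neq Suc_mod_two_neq[THEN not_sym]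
      unfolding vertex_weight_def by auto
  next
    case False
    then have "later_iff_adjacent pos E u v" using later_iff_adjacent_u_v by simp
    then show ?thesis
      using False later count_rotated_u count_rotated_v Suc_mod_two_neq Suc_mod_two_neq[THEN not_sym]
      unfolding vertex_weight_def by auto
  qed
qed

lemma weights_u_v_rotated:
  "vertex_weight pos E P' u = vertex_weight pos E P u \<and>
     vertex_weight pos E P' v \<noteq> vertex_weight pos E P v \<or>
   vertex_weight pos E P' v = vertex_weight pos E P v \<and>
     vertex_weight pos E P' u \<noteq> vertex_weight pos E P u"
proof (cases "has_later_desc pos P u")
  case False
  then show ?thesis using weights_if_u_latest by blast
next
  case True
  then obtain y where y: "y \<in> desc P u" "pos u < pos y" unfolding has_later_desc_def by blast
  obtain m where m: "m \<in> desc P u" "dominating m" "\<And>z. z \<in> desc P u \<Longrightarrow> pos z \<le> pos m"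
    using latest_in_desc_u[OF desc_refl y] by blast
  have um: "pos u < pos m" using y m(3) by force
  show ?thesis
  proof (cases "m = v")
    case True
    then show ?thesis using weights_if_v_latest[OF \<open>has_later_desc pos P u\<close>] m(3) by blast
  next
    case False
    then show ?thesis using weights_if_latest_below_v[OF m um] by blast
  qed
qed

lemma tree_colour_rotated: "tree_colour pos E V (r', P') \<noteq> tree_colour pos E V (r, P)"
proof -
  have split: "(\<Sum>z\<in>V. vertex_weight pos E Q z) =
      vertex_weight pos E Q u + vertex_weight pos E Q v + (\<Sum>z\<in>V - {u, v}. vertex_weight pos E Q z)"
    for Q
  proof -
    have "(\<Sum>z\<in>V. vertex_weight pos E Q z) =
        (\<Sum>z\<in>V - {u, v}. vertex_weight pos E Q z) + (\<Sum>z\<in>{u, v}. vertex_weight pos E Q z)"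
      using u_in_V v_in_V finite_vertices by (intro sum.subset_diff) auto
    then show ?thesis using u_ne_v by simp
  qed
  have rest: "(\<Sum>z\<in>V - {u, v}. vertex_weight pos E P' z) = (\<Sum>z\<in>V - {u, v}. vertex_weight pos E P z)"
    using vertex_weight_rotated_other by (intro sum.cong) auto
  show ?thesis
    unfolding tree_colour_def snd_conv split rest
    using add_mod_three_neq[of "vertex_weight pos E P' u + vertex_weight pos E P' v"
        "vertex_weight pos E P u + vertex_weight pos E P v"]
      weights_u_v_rotated vertex_weight_le[of pos E P u] vertex_weight_le[of pos E P v]
      vertex_weight_le[of pos E P' u] vertex_weight_le[of pos E P' v]
    by (auto simp: add.assoc)
qed

end

lemma rot_step_changes_tree_colour:
  assumes "creation_sequence V E pos dominating"
    and "T \<in> search_trees E V" "T' \<in> search_trees E V" "rot_step E T T'"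
  shows "tree_colour pos E V T' \<noteq> tree_colour pos E V T"
proof -
  obtain r P r' P' where T: "T = (r, P)" "T' = (r', P')" by (cases T, cases T') auto
  obtain u v where uv: "(v, u) \<in> P" "T' = rotate E T u v"
    using assms(4) unfolding rot_step_def T by auto
  have "threshold_rotation E V r P r' P' u v pos dominating"
    unfolding threshold_rotation_def rotation_def rotation_axioms_def
    using assms(1-3) uv T search_tree_imp_struct unfolding search_trees_def by auto
  then show ?thesis using threshold_rotation.tree_colour_rotated T by metis
qed

lemma rotation_graph_colorable_3:
  assumes "threshold V E"
  shows "colorable (search_trees E V) (rot_adj E) 3"
proof -
  obtain pos dominating where seq: "creation_sequence V E pos dominating"
    using threshold_creation_sequence[OF assms] by blast
  show ?thesis unfolding colorable_def
  proof (intro exI conjI ballI impI)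
    show "tree_colour pos E V ` search_trees E V \<subseteq> {..<3}" unfolding tree_colour_def by auto
    fix T T' assume "T \<in> search_trees E V" "T' \<in> search_trees E V" "rot_adj E T T'"
    then show "tree_colour pos E V T \<noteq> tree_colour pos E V T'"
      using rot_step_changes_tree_colour[OF seq] unfolding rot_adj_def by metis
  qed
qed

section \<open>An odd cycle of rotations\<close>

primrec path_above :: "'a list \<Rightarrow> 'a rtree \<Rightarrow> 'a rtree" where
  "path_above [] T = T"
| "path_above (x # xs) T = (x, insert (fst (path_above xs T), x) (snd (path_above xs T)))"

lemma search_tree_singleton: "search_tree E {x} x {}"
proof (rule search_tree.intros[where rt = "\<lambda>_. x" and Pf = "\<lambda>_. {}"])
  show "connected_in E {x}" unfolding connected_in_def by simp
qed (simp_all add: components_empty)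

lemma search_tree_insert_root:
  assumes "x \<notin> S" "connected_in E (insert x S)" "connected_in E S" "search_tree E S s Q"
  shows "search_tree E (insert x S) x (insert (s, x) Q)"
proof (rule search_tree.intros[where rt = "\<lambda>_. s" and Pf = "\<lambda>_. Q"])
  have "insert x S - {x} = S" using assms(1) by blast
  then have C: "components E (insert x S - {x}) = {S}" using components_connected[OF assms(3)] by simp
  have "s \<in> S" using search_tree_struct.root_in_V[OF search_tree_imp_struct[OF assms(4)]] .
  then show "\<forall>C\<in>components E (insert x S - {x}). s \<in> C \<and> search_tree E C s Q"
    unfolding C using assms(4) by simp
  show "insert (s, x) Q = (\<Union>C\<in>components E (insert x S - {x}). insert (s, x) Q)"
    unfolding C by simp
qed (use assms(2) in simp_all)

lemma search_tree_two_leaves: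
  assumes "x \<noteq> a" "x \<noteq> c" "a \<noteq> c" "{a, c} \<notin> E" "{a, a} \<notin> E" "{c, c} \<notin> E"
    "connected_in E {x, a, c}"
  shows "search_tree E {x, a, c} x {(a, x), (c, x)}"
proof (rule search_tree.intros[where rt = "\<lambda>C. if C = {a} then a else c" and Pf = "\<lambda>_. {}"])
  have "{x, a, c} - {x} = {a, c}" using assms by blast
  moreover have "ind_rel E {a, c} = {}"
    using assms(4,5,6) unfolding ind_rel_def by (auto simp: insert_commute)
  ultimately have C: "components E ({x, a, c} - {x}) = {{a}, {c}}"
    unfolding components_def using assms(3) by auto
  show "\<forall>C\<in>components E ({x, a, c} - {x}). (if C = {a} then a else c) \<in> C \<and>
      search_tree E C (if C = {a} then a else c) {}"
    unfolding C using search_tree_singleton assms(3) by auto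
  show "{(a, x), (c, x)} = (\<Union>C\<in>components E ({x, a, c} - {x}). insert (if C = {a} then a else c, x) {})"
    unfolding C using assms(3) by auto
qed (use assms(7) in simp_all)

lemma search_tree_path_above:
  assumes "distinct xs" "set xs \<inter> B = {}" "\<And>S. S \<subseteq> set xs \<Longrightarrow> connected_in E (S \<union> B)"
    "search_tree E B (fst T) (snd T)"
  shows "search_tree E (set xs \<union> B) (fst (path_above xs T)) (snd (path_above xs T))"
  using assms
proof (induction xs)
  case (Cons x xs)
  have "search_tree E (set xs \<union> B) (fst (path_above xs T)) (snd (path_above xs T))"
    using Cons by auto
  moreover have "x \<notin> set xs \<union> B" using Cons.prems(1,2) by auto
  moreover have "connected_in E (insert x (set xs \<union> B))" using Cons.prems(3)[of "set (x # xs)"] by simp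
  moreover have "connected_in E (set xs \<union> B)" using Cons.prems(3)[of "set xs"] by auto
  ultimately have "search_tree E (insert x (set xs \<union> B)) x
      (insert (fst (path_above xs T), x) (snd (path_above xs T)))"
    by (intro search_tree_insert_root)
  then show ?case by simp
qed simp

lemma path_above_field:
  assumes "snd T \<subseteq> B \<times> B" "fst T \<in> B"
  shows "snd (path_above xs T) \<subseteq> (set xs \<union> B) \<times> (set xs \<union> B) \<and> fst (path_above xs T) \<in> set xs \<union> B"
  using assms by (induction xs) auto

lemma path_above_mono: "snd T \<subseteq> snd (path_above xs T)"
  by (induction xs) auto

lemma fst_rotate: "fst (rotate E (a, Q) u v) = (if u = a then v else a)"
  unfolding rotate_def Let_def by simp

lemma desc_insert_root:
  assumes "x \<notin> fst ` Q" "y \<noteq> x"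
  shows "desc (insert (a, x) Q) y = desc Q y"
proof
  show "desc Q y \<subseteq> desc (insert (a, x) Q) y" by (rule desc_mono) blast
  show "desc (insert (a, x) Q) y \<subseteq> desc Q y"
  proof
    fix z assume "z \<in> desc (insert (a, x) Q) y"
    then have "(z, y) \<in> Q\<^sup>* \<or> ((z, a) \<in> Q\<^sup>* \<and> (x, y) \<in> Q\<^sup>*)"
      unfolding desc_def by (simp add: rtrancl_insert)
    moreover have "(x, y) \<notin> Q\<^sup>*"
    proof
      assume "(x, y) \<in> Q\<^sup>*"
      then show False using assms by (cases rule: converse_rtranclE) force+
    qed
    ultimately show "z \<in> desc Q y" unfolding desc_def by simp
  qed
qed

lemma rotate_insert_root:
  assumes x: "x \<notin> fst ` Q" "x \<noteq> u" "x \<noteq> v" and av: "a \<noteq> v"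
  shows "rotate E (x, insert (a, x) Q) u v =
    (x, insert (if u = a then v else a, x) (snd (rotate E (a, Q) u v)))"
proof -
  have D: "desc (insert (a, x) Q) y = desc Q y" if "(y, z) \<in> Q" for y z
    using desc_insert_root[OF x(1)] x(1) that by (metis fst_conv image_eqI)
  have K1: "{(x', y) \<in> insert (a, x) Q. x' \<noteq> u \<and> x' \<noteq> v \<and>
        \<not> (y = v \<and> (\<exists>s\<in>desc (insert (a, x) Q) x'. {u, s} \<in> E))}
     = (if a \<noteq> u then {(a, x)} else {}) \<union>
       {(x', y) \<in> Q. x' \<noteq> u \<and> x' \<noteq> v \<and> \<not> (y = v \<and> (\<exists>s\<in>desc Q x'. {u, s} \<in> E))}"
    using D av x(3) by auto
  have K2: "{(c, u) |c. (c, v) \<in> insert (a, x) Q \<and> (\<exists>s\<in>desc (insert (a, x) Q) c. {u, s} \<in> E)}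
     = {(c, u) |c. (c, v) \<in> Q \<and> (\<exists>s\<in>desc Q c. {u, s} \<in> E)}"
    using D x(3) by auto
  have K4: "{(v, p) |p. (u, p) \<in> insert (a, x) Q} =
      (if u = a then {(v, x)} else {}) \<union> {(v, p) |p. (u, p) \<in> Q}"
    by auto
  show ?thesis
    unfolding rotate_def Let_def fst_conv snd_conv K1 K2 K4 using x(2) by auto
qed

lemma rotate_path_above:
  assumes "distinct xs" "set xs \<inter> B = {}" "u \<in> B" "v \<in> B" "snd T \<subseteq> B \<times> B" "fst T \<in> B"
    "fst T \<noteq> v"
  shows "rotate E (path_above xs T) u v = path_above xs (rotate E T u v)"
  using assms
proof (induction xs)
  case (Cons x xs)
  note prems = Cons.prems
  obtain a Q where aQ: "path_above xs T = (a, Q)" by (cases "path_above xs T")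
  have IH: "rotate E (a, Q) u v = path_above xs (rotate E T u v)"
    using Cons.IH prems aQ by simp
  have F: "Q \<subseteq> (set xs \<union> B) \<times> (set xs \<union> B)" "a \<in> set xs \<union> B"
    using path_above_field[OF prems(5,6), of xs] aQ by simp_all
  have xn: "x \<notin> set xs \<union> B" using prems(1,2) by auto
  have "x \<notin> fst ` Q" using F(1) xn by auto
  moreover have "x \<noteq> u" "x \<noteq> v" using xn prems(3,4) by auto
  moreover have "a \<noteq> v"
  proof (cases xs)
    case Nil
    then show ?thesis using prems(7) aQ by simp
  next
    case (Cons y ys)
    then have "a = y" using aQ by simp
    then show ?thesis using Cons prems(1,2,4) by auto
  qed
  ultimately have "rotate E (x, insert (a, x) Q) u v =
      (x, insert (if u = a then v else a, x) (snd (rotate E (a, Q) u v)))"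
    by (rule rotate_insert_root)
  moreover have "fst (path_above xs (rotate E T u v)) = (if u = a then v else a)"
    using IH fst_rotate[of E a Q u v] by simp
  ultimately show ?case using IH aQ by simp
qed simp

lemma rot_step_path_above:
  assumes "distinct xs" "set xs \<inter> B = {}" "(v, u) \<in> snd T" "snd T \<subseteq> B \<times> B" "fst T \<in> B"
    "fst T \<noteq> v"
  shows "rot_step E (path_above xs T) (path_above xs (rotate E T u v))"
proof -
  have "u \<in> B" "v \<in> B" using assms(3,4) by auto
  then have "rotate E (path_above xs T) u v = path_above xs (rotate E T u v)"
    using rotate_path_above[OF assms(1,2) _ _ assms(4-6)] by blast
  moreover have "(v, u) \<in> snd (path_above xs T)" using path_above_mono assms(3) by blast
  ultimately show ?thesis unfolding rot_step_def by metis
qed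

lemma search_tree_pair:
  assumes "x \<noteq> y" "connected_in E {x, y}"
  shows "search_tree E {x, y} x {(y, x)}"
  using search_tree_insert_root[OF _ assms(2) _ search_tree_singleton] assms(1)
    connected_in_star[of y "{y}"] by simp

locale induced_path =
  fixes E :: "'a set set" and a w c :: 'a
  assumes distinct: "a \<noteq> w" "w \<noteq> c" "a \<noteq> c"
    and edges: "{a, w} \<in> E" "{c, w} \<in> E"
    and non_edge: "{a, c} \<notin> E"
    and no_loop: "{x, x} \<notin> E"
begin

lemma connected_through_w: "w \<in> S \<Longrightarrow> S \<subseteq> {a, w, c} \<Longrightarrow> connected_in E S"
  by (rule connected_in_star[where w = w]) (use edges in auto)

definition "T1 = (w, {(a, w), (c, w)})"
definition "T2 = (a, {(w, a), (c, w)})"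
definition "T3 = (a, {(c, a), (w, c)})"
definition "T4 = (c, {(a, c), (w, a)})"
definition "T5 = (c, {(w, c), (a, w)})"

lemma search_trees_cycle:
  "search_tree E {a, w, c} (fst T1) (snd T1)" "search_tree E {a, w, c} (fst T2) (snd T2)"
  "search_tree E {a, w, c} (fst T3) (snd T3)" "search_tree E {a, w, c} (fst T4) (snd T4)"
  "search_tree E {a, w, c} (fst T5) (snd T5)"
proof -
  have top: "search_tree E {a, w, c} x (insert (y, x) {(z, y)})"
    if S: "{a, w, c} = insert x {y, z}" and "x \<notin> {y, z}" "y \<noteq> z" "w \<in> {y, z}" for x y z
  proof -
    have "{y, z} \<subseteq> {a, w, c}" using S by blast
    then have yz: "connected_in E {y, z}" by (rule connected_through_w[OF \<open>w \<in> {y, z}\<close>])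
    have "connected_in E {a, w, c}" by (rule connected_through_w) simp_all
    then have "connected_in E (insert x {y, z})" using S by simp
    from search_tree_insert_root[OF \<open>x \<notin> {y, z}\<close> this yz search_tree_pair[OF \<open>y \<noteq> z\<close> yz]]
    show ?thesis using S by simp
  qed
  have "connected_in E {w, a, c}" by (rule connected_through_w) auto
  with distinct have "search_tree E {w, a, c} w {(a, w), (c, w)}"
    using search_tree_two_leaves non_edge no_loop by metis
  then show "search_tree E {a, w, c} (fst T1) (snd T1)" unfolding T1_def by (simp add: insert_commute)
  show "search_tree E {a, w, c} (fst T2) (snd T2)"
    unfolding T2_def fst_conv snd_conv by (rule top) (use distinct in auto)
  show "search_tree E {a, w, c} (fst T3) (snd T3)"
    unfolding T3_def fst_conv snd_conv by (rule top) (use distinct in auto)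
  show "search_tree E {a, w, c} (fst T4) (snd T4)"
    unfolding T4_def fst_conv snd_conv by (rule top) (use distinct in auto)
  show "search_tree E {a, w, c} (fst T5) (snd T5)"
    unfolding T5_def fst_conv snd_conv by (rule top) (use distinct in auto)
qed

lemma rotations_cycle:
  "rotate E T1 w a = T2" "rotate E T2 w c = T3" "rotate E T3 a c = T4"
  "rotate E T4 a w = T5" "rotate E T5 c w = T1"
proof -
  have "desc {(a, w), (c, w)} a = {a}" by (rule desc_leaf) (use distinct in auto)
  moreover have "desc {(w, a), (c, w)} c = {c}" by (rule desc_leaf) (use distinct in auto)
  moreover have "desc {(c, a), (w, c)} w = {w}" by (rule desc_leaf) (use distinct in auto)
  moreover have "desc {(a, c), (w, a)} w = {w}" by (rule desc_leaf) (use distinct in auto)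
  moreover have "desc {(w, c), (a, w)} a = {a}" by (rule desc_leaf) (use distinct in auto)
  ultimately show
 "rotate E T1 w a = T2" "rotate E T2 w c = T3" "rotate E T3 a c = T4"
    "rotate E T4 a w = T5" "rotate E T5 c w = T1"
    unfolding T1_def T2_def T3_def T4_def T5_def rotate_def Let_def
    using distinct edges non_edge by (auto simp: insert_commute)
qed

lemma rot_steps_cycle_above:
  assumes "distinct xs" "set xs \<inter> {a, w, c} = {}"
  shows "rot_step E (path_above xs T1) (path_above xs T2)" "rot_step E (path_above xs T2) (path_above xs T3)"
    "rot_step E (path_above xs T3) (path_above xs T4)" "rot_step E (path_above xs T4) (path_above xs T5)"
    "rot_step E (path_above xs T5) (path_above xs T1)"
proof -
  have step: "rot_step E (path_above xs T) (path_above xs T')"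
    if "(v, u) \<in> snd T" "snd T \<subseteq> {a, w, c} \<times> {a, w, c}" "fst T \<in> {a, w, c}" "fst T \<noteq> v"
      "rotate E T u v = T'" for T T' u v
    using rot_step_path_above[OF assms that(1-4), where E = E] that(5) by simp
  show "rot_step E (path_above xs T1) (path_above xs T2)"
    by (rule step[OF _ _ _ _ rotations_cycle(1)]) (use distinct in \<open>auto simp: T1_def\<close>)
  show "rot_step E (path_above xs T2) (path_above xs T3)"
    by (rule step[OF _ _ _ _ rotations_cycle(2)]) (use distinct in \<open>auto simp: T2_def\<close>)
  show "rot_step E (path_above xs T3) (path_above xs T4)"
    by (rule step[OF _ _ _ _ rotations_cycle(3)]) (use distinct in \<open>auto simp: T3_def\<close>)
  show "rot_step E (path_above xs T4) (path_above xs T5)"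
    by (rule step[OF _ _ _ _ rotations_cycle(4)]) (use distinct in \<open>auto simp: T4_def\<close>)
  show "rot_step E (path_above xs T5) (path_above xs T1)"
    by (rule step[OF _ _ _ _ rotations_cycle(5)]) (use distinct in \<open>auto simp: T5_def\<close>)
qed

end

lemma odd_cycle_not_colorable_2:
  assumes "x0 \<in> W" "x1 \<in> W" "x2 \<in> W" "x3 \<in> W" "x4 \<in> W"
    and "A x0 x1" "A x1 x2" "A x2 x3" "A x3 x4" "A x4 x0"
  shows "\<not> colorable W A 2"
proof
  assume "colorable W A 2"
  then obtain f :: "'a \<Rightarrow> nat"
    where range: "f ` W \<subseteq> {..<2}" and proper: "\<forall>x\<in>W. \<forall>y\<in>W. A x y \<longrightarrow> f x \<noteq> f y"
    unfolding colorable_def by blast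
  have f: "f ` W \<subseteq> {..<2}" "\<And>x y. x \<in> W \<Longrightarrow> y \<in> W \<Longrightarrow> A x y \<Longrightarrow> f x \<noteq> f y"
    using range proper by auto
  have "f x0 < 2" "f x1 < 2" "f x2 < 2" "f x3 < 2" "f x4 < 2" using f(1) assms(1-5) by auto
  moreover have "f x0 \<noteq> f x1" "f x1 \<noteq> f x2" "f x2 \<noteq> f x3" "f x3 \<noteq> f x4" "f x4 \<noteq> f x0"
    using f(2)[OF assms(1,2,6)] f(2)[OF assms(2,3,7)] f(2)[OF assms(3,4,8)] f(2)[OF assms(4,5,9)]
      f(2)[OF assms(5,1,10)] by auto
  ultimately show False by linarith
qed

lemma colorable_mono: "colorable W A k \<Longrightarrow> k \<le> l \<Longrightarrow> colorable W A l"
  unfolding colorable_def by (meson lessThan_subset_iff subset_trans)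

lemma (in creation_sequence) universal_vertex:
  assumes "connected_in E V" "x \<in> V" "y \<in> V" "x \<noteq> y"
  obtains w where "w \<in> V" "\<And>z. z \<in> V \<Longrightarrow> z \<noteq> w \<Longrightarrow> {z, w} \<in> E"
proof -
  have "pos x \<noteq> pos y" using pos_eq_iff assms(2-4) by blast
  then obtain x' y' where "x' \<in> V" "y' \<in> V" "pos x' < pos y'"
    using assms(2,3) by (metis linorder_neqE_nat)
  then obtain w where w: "w \<in> V" "dominating w" "\<And>z. z \<in> V \<Longrightarrow> pos z \<le> pos w"
    using latest_vertex_dominating[OF assms(1) subset_refl] by blast
  have "{z, w} \<in> E" if "z \<in> V" "z \<noteq> w" for z
  proof -
    have "pos z \<noteq> pos w" using pos_eq_iff that w(1) by blast
    then show ?thesis using adjacent_later_dominating[OF that(1) w(1) _ w(2)] w(3)[OF that(1)] by simp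
  qed
  then show ?thesis using that w(1) by blast
qed

lemma (in creation_sequence) induced_path_through_universal_vertex:
  assumes "connected_in E V" "\<not> complete_graph V E"
  obtains a w c where "induced_path E a w c" "a \<in> V" "c \<in> V" "w \<in> V"
    "\<And>z. z \<in> V \<Longrightarrow> z \<noteq> w \<Longrightarrow> {z, w} \<in> E"
proof -
  obtain a c where ac: "a \<in> V" "c \<in> V" "a \<noteq> c" "{a, c} \<notin> E"
    using assms(2) unfolding complete_graph_def by blast
  obtain w where w: "w \<in> V" "\<And>z. z \<in> V \<Longrightarrow> z \<noteq> w \<Longrightarrow> {z, w} \<in> E"
    using universal_vertex[OF assms(1) ac(1-3)] by blast
  have "a \<noteq> w"
  proof
    assume "a = w"
    then show False using w(2)[OF ac(2)] ac(3,4) by (simp add: insert_commute)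
  qed
  moreover have "c \<noteq> w"
  proof
    assume "c = w"
    then show False using w(2)[OF ac(1)] ac(3,4) by simp
  qed
  ultimately have "induced_path E a w c"
    using ac(3,4) w(2)[OF ac(1)] w(2)[OF ac(2)] no_loop by unfold_locales auto
  then show ?thesis using that ac(1,2) w by blast
qed

lemma rotation_graph_not_colorable_2:
  assumes "threshold V E" "connected_in E V" "\<not> complete_graph V E"
  shows "\<not> colorable (search_trees E V) (rot_adj E) 2"
proof -
  obtain pos dominating where seq: "creation_sequence V E pos dominating"
    using threshold_creation_sequence[OF assms(1)] by blast
  obtain a w c where path: "induced_path E a w c" and in_V: "a \<in> V" "c \<in> V" "w \<in> V"
    and universal: "\<And>z. z \<in> V \<Longrightarrow> z \<noteq> w \<Longrightarrow> {z, w} \<in> E"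
    using creation_sequence.induced_path_through_universal_vertex[OF seq assms(2,3)] by blast
  interpret induced_path E a w c by (rule path)
  obtain xs where xs: "set xs = V - {a, w, c}" "distinct xs"
    using finite_distinct_list[OF finite_Diff[OF creation_sequence.finite_vertices[OF seq]]] by blast
  have disjoint: "set xs \<inter> {a, w, c} = {}" using xs(1) by blast
  have V_eq: "set xs \<union> {a, w, c} = V" using xs(1) in_V by auto
  have connected: "connected_in E (S \<union> {a, w, c})" if "S \<subseteq> set xs" for S
  proof (rule connected_in_star[of w])
    fix z assume "z \<in> S \<union> {a, w, c}" "z \<noteq> w"
    moreover have "S \<union> {a, w, c} \<subseteq> V" using that V_eq by blast
    ultimately show "{z, w} \<in> E" using universal by blast
  qed simp
  have in_trees: "path_above xs T \<in> search_trees E V"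
    if "search_tree E {a, w, c} (fst T) (snd T)" for T
    using search_tree_path_above[OF xs(2) disjoint connected that] V_eq
    unfolding search_trees_def by (cases "path_above xs T") simp
  show ?thesis
    by (rule odd_cycle_not_colorable_2[OF in_trees[OF search_trees_cycle(1)]
          in_trees[OF search_trees_cycle(2)] in_trees[OF search_trees_cycle(3)]
          in_trees[OF search_trees_cycle(4)] in_trees[OF search_trees_cycle(5)]])
      (use rot_steps_cycle_above[OF xs(2) disjoint] in \<open>simp_all add: rot_adj_def\<close>)
qed

theorem corollary3p5:
  fixes V :: "'a set" and E :: "'a set set"
  assumes "threshold V E"
    and "connected_in E V"
    and "\<not> complete_graph V E"
  shows "chromatic_number (search_trees E V) (rot_adj E) = 3"
  unfolding chromatic_number_def
proof (rule Least_equality)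
  show "colorable (search_trees E V) (rot_adj E) 3"
    using rotation_graph_colorable_3[OF assms(1)] .
  fix k assume k: "colorable (search_trees E V) (rot_adj E) k"
  show "3 \<le> k"
  proof (rule ccontr)
    assume "\<not> 3 \<le> k"
    then have "colorable (search_trees E V) (rot_adj E) 2" using colorable_mono[OF k] by simp
    then show False using rotation_graph_not_colorable_2[OF assms] by blast
  qed
qed

end
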